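(* Consider $\dot x=f(x)+Bu+Cw$ with $x\in\mathbb{R}^n$, $u\in\mathbb{R}^p$, $w\in\mathbb{R}^r$, $f$ continuously differentiable, $B\in\mathbb{R}^{n\times p}$, $C\in\mathbb{R}^{n\times r}$, and suppose there are matrices $A_1,\dots,A_k\in\mathbb{R}^{n\times n}$ with $D_xf(x)\in\mathrm{conv}\{A_1,\dots,A_k\}$ for all $x\in\mathbb{R}^n$. Let $H\in\mathbb{R}^{m\times n}$ have full column rank, $\underline h\le\overline h\in\mathbb{R}^m$, $\mathcal P=\{x:\underline h\le Hx\le\overline h\}$, let $K=\{x:Hx\ge0_m\}$ with generating matrix $V\in\mathbb{R}^{n\times q}$ (i.e. $K=\{Vy:y\ge0_q\}$), and let $\underline\eta,\overline\eta\in\mathbb{R}^n$ satisfy $H\underline\eta=\underline h$, $H\overline\eta=\overline h$. Let $\underline w\le\overline w\in\mathbb{R}^r$. Suppose $(F^*,\alpha^* )\in\mathbb{R}^{p\times n}\times\mathbb{R}$ satisfies $H(A_i+BF^*+\alpha^*I_n)V\ge0_{m\times q}$ for all $i=1,\dots,k$, $H(f(\overline\eta)+BF^*\overline\eta)+(HC)^+\overline w+(HC)^-\underline w\le0_m$, $H(f(\underline\eta)+BF^*\underline\eta)+(HC)^+\underline w+(HC)^-\overline w\ge0_m$. Then $\mathcal P$ is forward invariant for the closed-loop system $\dot x=f(x)+BF^*x+Cw(t)$ for every disturbance signal $t\mapsto w(t)$ with $w(t)\in[\underline w,\overline w]$ for all $t\ge0$.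
   Context: For a matrix $M$, $M^+$ and $M^-$ denote its entrywise positive and negative parts: $(M^+)_{ij}=\max(M_{ij},0)$, $(M^-)_{ij}=\min(M_{ij},0)$. Vector/matrix inequalities are entrywise; $[\underline w,\overline w]=\{w:\underline w\le w\le\overline w\}$. $\mathrm{conv}$ denotes convex hull. A set $\mathcal P$ is forward invariant if every trajectory starting in $\mathcal P$ remains in $\mathcal P$ for all $t\ge0$. *)

theory Defs
  imports "HOL-Analysis.Analysis"
begin

definition mat_pos :: "real^'c^'r \<Rightarrow> real^'c^'r" where
  "mat_pos M = (\<chi> i j. max (M $ i $ j) 0)"

definition mat_neg :: "real^'c^'r \<Rightarrow> real^'c^'r" where
  "mat_neg M = (\<chi> i j. min (M $ i $ j) 0)"

definition forward_invariant :: "(real \<Rightarrow> real^'n \<Rightarrow> real^'n) \<Rightarrow> (real^'n) set \<Rightarrow> bool" where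
  "forward_invariant g P \<longleftrightarrow>
     (\<forall>x::real \<Rightarrow> real^'n.
        (\<forall>t\<ge>0. (x has_vector_derivative g t (x t)) (at t within {0..})) \<and> x 0 \<in> P
        \<longrightarrow> (\<forall>t\<ge>0. x t \<in> P))"

end

theory Submission
  imports Defs
begin

text \<open>
Write g x = f x + B F x. The first condition, together with the convexity of the set of
Jacobians, makes x \<mapsto> g x + \<alpha> x monotone for the order induced by the cone
K = {x. H x \<ge> 0}: integrate the derivative along the segment from x to y, whose direction
V z lies in K. Comparing a point p of P with \<eta>_u and \<eta>_l, the second and third
conditions then show that an explicit Euler step p + h (g p + C w) stays in P for every
0 \<le> h with h \<alpha> \<le> 1 and every disturbance value w in the box. As g is globally
Lipschitz, the distance d of a trajectory from the closed set P therefore has upper right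
Dini derivative at most L d, so it stays 0.
\<close>

lemma matrix_vector_mult_le_box_bound:
  fixes M :: "real^'c^'r"
  assumes "wl \<le> w" "w \<le> wu"
  shows "M *v w \<le> mat_pos M *v wu + mat_neg M *v wl"
  unfolding less_eq_vec_def
proof
  fix a
  have "M$a$j * w$j \<le> max (M$a$j) 0 * wu$j + min (M$a$j) 0 * wl$j" for j
  proof -
    have "wl$j \<le> w$j" "w$j \<le> wu$j" using assms by (auto simp: less_eq_vec_def)
    then show ?thesis
      by (cases "M$a$j \<ge> 0") (auto simp: mult_left_mono mult_left_mono_neg)
  qed
  then show "(M *v w) $ a \<le> (mat_pos M *v wu + mat_neg M *v wl) $ a"
    by (simp add: matrix_vector_mult_def mat_pos_def mat_neg_def sum.distrib[symmetric] sum_mono)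
qed

lemma box_bound_le_matrix_vector_mult:
  fixes M :: "real^'c^'r"
  assumes "wl \<le> w" "w \<le> wu"
  shows "mat_pos M *v wl + mat_neg M *v wu \<le> M *v w"
proof -
  have "M *v (- w) \<le> mat_pos M *v (- wl) + mat_neg M *v (- wu)"
    using assms by (intro matrix_vector_mult_le_box_bound) (simp_all add: less_eq_vec_def)
  then have "- (M *v w) \<le> - (mat_pos M *v wl + mat_neg M *v wu)"
    by (simp add: linear_neg[OF matrix_vector_mul_linear])
  then show ?thesis by (simp only: neg_le_iff_le)
qed

lemma matrix_vector_mult_nonneg:
  fixes M :: "real^'c^'r"
  assumes "0 \<le> M" "0 \<le> y"
  shows "0 \<le> M *v y"
  using assms by (auto simp: less_eq_vec_def matrix_vector_mult_def intro!: sum_nonneg)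

lemma nonneg_sandwich_convex_hull:
  fixes H :: "real^'n^'m" and V :: "real^'q^'n" and Q :: "real^'n^'n"
  assumes "\<And>M. M \<in> S \<Longrightarrow> 0 \<le> H ** (M + Q) ** V" and "M \<in> convex hull S"
  shows "0 \<le> H ** (M + Q) ** V"
proof -
  have "convex {M. 0 \<le> H ** (M + Q) ** V}"
  proof (rule convexI, unfold mem_Collect_eq)
    fix M1 M2 :: "real^'n^'n" and u v :: real
    assume nonneg: "0 \<le> H ** (M1 + Q) ** V" "0 \<le> H ** (M2 + Q) ** V" "0 \<le> u" "0 \<le> v"
      and "u + v = 1"
    have split: "u *\<^sub>R M1 + v *\<^sub>R M2 + Q = u *\<^sub>R (M1 + Q) + v *\<^sub>R (M2 + Q)"
      using \<open>u + v = 1\<close> by (simp add: algebra_simps flip: scaleR_add_left)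
    have "H ** (u *\<^sub>R M1 + v *\<^sub>R M2 + Q) ** V
        = u *\<^sub>R (H ** (M1 + Q) ** V) + v *\<^sub>R (H ** (M2 + Q) ** V)"
      unfolding split
      by (simp add: vec_eq_iff matrix_matrix_mult_def sum_distrib_left sum.distrib algebra_simps)
    with nonneg show "0 \<le> H ** (u *\<^sub>R M1 + v *\<^sub>R M2 + Q) ** V"
      by (simp add: less_eq_vec_def)
  qed
  then show ?thesis
    using hull_minimal[of S "{M. 0 \<le> H ** (M + Q) ** V}" convex] assms by blast
qed

lemma cone_monotone_if_jacobian_cone_preserving:
  fixes f :: "real^'n \<Rightarrow> real^'n" and J :: "real^'n \<Rightarrow> real^'n^'n" and K :: "real^'n^'n"
    and H :: "real^'n^'m" and V :: "real^'q^'n"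
  assumes f_deriv: "\<And>x. (f has_derivative (\<lambda>v. J x *v v)) (at x)"
    and JK_nonneg: "\<And>x. 0 \<le> H ** (J x + K) ** V"
    and V_gen: "{x. 0 \<le> H *v x} = {V *v z | z. 0 \<le> z}"
    and "0 \<le> H *v (y - x)"
  shows "0 \<le> H *v (f y + K *v y - (f x + K *v x))"
  unfolding less_eq_vec_def zero_index
proof
  fix a
  define G where "G u = f u + K *v u" for u
  define d where "d = y - x"
  obtain z where "0 \<le> z" "d = V *v z"
    using V_gen \<open>0 \<le> H *v (y - x)\<close> unfolding d_def by blast
  define \<psi> where "\<psi> s = (H *v G (x + s *\<^sub>R d)) $ a" for s
  have G_deriv: "(G has_derivative (\<lambda>v. (J u + K) *v v)) (at u)" for u
    unfolding G_def using f_deriv[of u]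
    by (auto intro!: derivative_eq_intros bounded_linear.has_derivative[OF matrix_vector_mul_bounded_linear]
        simp: matrix_vector_mult_add_rdistrib)
  have \<psi>_deriv: "(\<psi> has_real_derivative (H *v ((J (x + s *\<^sub>R d) + K) *v d)) $ a) (at s)" for s
  proof -
    have "((\<lambda>s. G (x + s *\<^sub>R d)) has_derivative (\<lambda>h. (J (x + s *\<^sub>R d) + K) *v (h *\<^sub>R d))) (at s)"
      by (rule has_derivative_compose[OF _ G_deriv, where f="\<lambda>s. x + s *\<^sub>R d", simplified])
         (auto intro!: derivative_eq_intros)
    then have "(\<psi> has_derivative (\<lambda>h. (H *v ((J (x + s *\<^sub>R d) + K) *v (h *\<^sub>R d))) $ a)) (at s)"
      unfolding \<psi>_def
      by (auto intro!: derivative_eq_intros bounded_linear.has_derivative[OF bounded_linear_vec_nth]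
            bounded_linear.has_derivative[OF matrix_vector_mul_bounded_linear])
    then show ?thesis
      by (simp add: has_field_derivative_def matrix_vector_mult_scaleR mult_commute_abs)
  qed
  have "0 \<le> (H *v ((J u + K) *v d)) $ a" for u
    using matrix_vector_mult_nonneg[OF JK_nonneg \<open>0 \<le> z\<close>]
    by (simp add: \<open>d = V *v z\<close> matrix_vector_mul_assoc matrix_mul_assoc less_eq_vec_def)
  then have "\<psi> 0 \<le> \<psi> 1"
    using \<psi>_deriv
    by (intro DERIV_nonneg_imp_increasing_open[of 0 1 \<psi>])
       (auto intro: DERIV_isCont continuous_at_imp_continuous_on)
  then show "0 \<le> (H *v (f y + K *v y - (f x + K *v x))) $ a"
    by (simp add: \<psi>_def G_def d_def matrix_vector_mult_diff_distrib)
qed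

lemma lipschitz_if_bounded_jacobian:
  fixes f :: "real^'n \<Rightarrow> real^'m" and J :: "real^'n \<Rightarrow> real^'n^'m"
  assumes f_deriv: "\<And>x. (f has_derivative (\<lambda>v. J x *v v)) (at x)"
    and "bounded (range J)"
  obtains L where "L-lipschitz_on UNIV f"
proof -
  obtain b where b: "\<And>x. norm (J x) \<le> b"
    using \<open>bounded (range J)\<close> by (auto simp: bounded_iff)
  have "\<bar>J x $ i $ j\<bar> \<le> b" for x i j
    using component_le_norm_cart[of "J x $ i" j] Finite_Cartesian_Product.norm_nth_le[of "J x" i] b[of x]
    by linarith
  then have "onorm (\<lambda>v. J x *v v) \<le> real CARD('m) * real CARD('n) * b" for x
    using onorm_le_matrix_component by blast
  then have "norm (f x - f y) \<le> real CARD('m) * real CARD('n) * b * norm (x - y)" for x y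
    using f_deriv by (intro differentiable_bound[where S=UNIV]) auto
  moreover have "0 \<le> b"
    using norm_ge_zero b order_trans by blast
  ultimately show ?thesis
    by (intro that[of "real CARD('m) * real CARD('n) * b"] lipschitz_onI) (auto simp: dist_norm)
qed

lemma nonpos_if_nonpos_persists_rightwards:
  fixes \<psi> :: "real \<Rightarrow> real"
  assumes cont: "continuous_on {0..T} \<psi>" and "\<psi> 0 \<le> 0"
    and persists: "\<And>s. 0 \<le> s \<Longrightarrow> s < T \<Longrightarrow> \<psi> s \<le> 0 \<Longrightarrow>
                     \<exists>\<delta>>0. \<forall>h. 0 < h \<and> h < \<delta> \<longrightarrow> \<psi> (s + h) \<le> 0"
    and t: "0 \<le> t" "t \<le> T"
  shows "\<psi> t \<le> 0"
proof (rule ccontr)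
  assume "\<not> \<psi> t \<le> 0"
  define Z where "Z = {0..t} \<inter> \<psi> -` {..0}"
  have "compact Z"
    unfolding Z_def compact_eq_bounded_closed using t
    by (intro conjI bounded_Int continuous_closed_preimage continuous_on_subset[OF cont]) auto
  moreover have "0 \<in> Z" using t \<open>\<psi> 0 \<le> 0\<close> by (simp add: Z_def)
  ultimately have s: "Sup Z \<in> Z" and s_max: "\<And>s'. s' \<in> Z \<Longrightarrow> s' \<le> Sup Z"
    by (auto intro!: closed_contains_Sup cSup_upper compact_imp_closed bounded_imp_bdd_above
          compact_imp_bounded)
  define s where "s = Sup Z"
  have "s < t" using s \<open>\<not> \<psi> t \<le> 0\<close> by (auto simp: Z_def s_def less_le)
  then obtain \<delta> where "\<delta> > 0" and \<delta>: "\<And>h. 0 < h \<Longrightarrow> h < \<delta> \<Longrightarrow> \<psi> (s + h) \<le> 0"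
    using persists[of s] s t by (auto simp: Z_def s_def)
  define h where "h = min (\<delta> / 2) (t - s)"
  have "s + h \<in> Z"
    using \<delta>[of h] \<open>\<delta> > 0\<close> \<open>s < t\<close> s by (auto simp: Z_def h_def s_def)
  then show False
    using s_max[of "s + h"] \<open>\<delta> > 0\<close> \<open>s < t\<close> by (simp add: h_def s_def)
qed

lemma nonpos_if_dini_linear_bound:
  fixes D :: "real \<Rightarrow> real"
  assumes cont: "continuous_on {0..} D" and "D 0 \<le> 0" and "0 \<le> L"
    and dini: "\<And>t e. 0 \<le> t \<Longrightarrow> 0 < e \<Longrightarrow>
       \<exists>\<delta>>0. \<forall>h. 0 < h \<and> h < \<delta> \<longrightarrow> D (t + h) \<le> (1 + h * L) * D t + e * h"
    and "0 \<le> T"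
  shows "D T \<le> 0"
proof (rule field_le_epsilon)
  fix \<epsilon> :: real assume "0 < \<epsilon>"
  define \<phi> where "\<phi> t = \<epsilon> * exp ((L + 1) * (t - T))" for t
  have \<phi>_pos: "0 < \<phi> t" for t using \<open>0 < \<epsilon>\<close> by (simp add: \<phi>_def)
  have "D T - \<phi> T \<le> 0"
  proof (rule nonpos_if_nonpos_persists_rightwards[where \<psi>="\<lambda>t. D t - \<phi> t"])
    show "continuous_on {0..T} (\<lambda>t. D t - \<phi> t)"
      unfolding \<phi>_def by (intro continuous_intros continuous_on_subset[OF cont]) auto
    show "D 0 - \<phi> 0 \<le> 0" using \<open>D 0 \<le> 0\<close> \<phi>_pos[of 0] by simp
  next
    fix s assume "0 \<le> s" "s < T" "D s - \<phi> s \<le> 0"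
    obtain \<delta> where "\<delta> > 0"
      and \<delta>: "\<And>h. 0 < h \<Longrightarrow> h < \<delta> \<Longrightarrow> D (s + h) \<le> (1 + h * L) * D s + (\<phi> s / 2) * h"
      using dini[OF \<open>0 \<le> s\<close>, of "\<phi> s / 2"] \<phi>_pos[of s] by auto
    have "D (s + h) - \<phi> (s + h) \<le> 0" if "0 < h" "h < \<delta>" for h
    proof -
      have "D (s + h) \<le> (1 + h * L) * \<phi> s + (\<phi> s / 2) * h"
        using \<delta>[OF that] \<open>D s - \<phi> s \<le> 0\<close> \<open>0 \<le> L\<close> \<open>0 < h\<close>
        by (smt (verit) mult_left_mono zero_le_mult_iff)
      also have "\<dots> \<le> \<phi> s * (1 + (L + 1) * h)"
        using \<phi>_pos[of s] \<open>0 < h\<close> by (simp add: algebra_simps)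
      also have "\<dots> \<le> \<phi> s * exp ((L + 1) * h)"
        using \<phi>_pos[of s] by (intro mult_left_mono) auto
      also have "\<dots> = \<phi> (s + h)"
        by (simp add: \<phi>_def algebra_simps flip: exp_add)
      finally show ?thesis by simp
    qed
    then show "\<exists>\<delta>>0. \<forall>h. 0 < h \<and> h < \<delta> \<longrightarrow> D (s + h) - \<phi> (s + h) \<le> 0"
      using \<open>\<delta> > 0\<close> by blast
  qed (use \<open>0 \<le> T\<close> in auto)
  then show "D T \<le> 0 + \<epsilon>" by (simp add: \<phi>_def)
qed

lemma infdist_right_dini_bound:
  fixes x :: "real \<Rightarrow> real^'n" and v :: "real^'n \<Rightarrow> real^'n" and P :: "(real^'n) set"
  assumes x_deriv: "(x has_vector_derivative v (x t)) (at t within {0..})" and "0 \<le> t"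
    and lip: "L-lipschitz_on UNIV v"
    and "0 < \<delta>\<^sub>1" and stay: "\<And>p h. p \<in> P \<Longrightarrow> 0 < h \<Longrightarrow> h < \<delta>\<^sub>1 \<Longrightarrow> p + h *\<^sub>R v p \<in> P"
    and "P \<noteq> {}" and "0 < e"
  shows "\<exists>\<delta>>0. \<forall>h. 0 < h \<and> h < \<delta> \<longrightarrow>
           infdist (x (t + h)) P \<le> (1 + h * L) * infdist (x t) P + e * h"
proof -
  obtain \<delta>\<^sub>2 where "\<delta>\<^sub>2 > 0" and tangent: "\<And>s. s \<in> {0..} \<Longrightarrow> norm (s - t) < \<delta>\<^sub>2 \<Longrightarrow>
      norm (x s - x t - (s - t) *\<^sub>R v (x t)) \<le> e * norm (s - t)"
    using x_deriv \<open>0 < e\<close> unfolding has_vector_derivative_def has_derivative_within_alt by blast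
  have "infdist (x (t + h)) P \<le> (1 + h * L) * infdist (x t) P + e * h"
    if "0 < h" "h < min \<delta>\<^sub>1 \<delta>\<^sub>2" for h
  proof -
    have "infdist (x (t + h)) P - e * h \<le> (1 + h * L) * dist (x t) p" if "p \<in> P" for p
    proof -
      have "infdist (x (t + h)) P \<le> dist (x (t + h)) (p + h *\<^sub>R v p)"
        using stay[OF \<open>p \<in> P\<close>] \<open>0 < h\<close> \<open>h < min \<delta>\<^sub>1 \<delta>\<^sub>2\<close> by (intro infdist_le) auto
      also have "\<dots> = norm ((x (t + h) - x t - h *\<^sub>R v (x t)) + (x t - p) + h *\<^sub>R (v (x t) - v p))"
        by (simp add: dist_norm algebra_simps)
      also have "\<dots> \<le> e * h + dist (x t) p + h * (L * dist (x t) p)"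
        using tangent[of "t + h"] \<open>0 < h\<close> \<open>h < min \<delta>\<^sub>1 \<delta>\<^sub>2\<close> \<open>0 \<le> t\<close>
          lipschitz_on_normD[OF lip, of "x t" p]
        by (intro norm_triangle_le add_mono) (auto simp: dist_norm intro!: mult_left_mono)
      finally show ?thesis by (simp add: algebra_simps)
    qed
    moreover have "0 < 1 + h * L"
      using \<open>0 < h\<close> lipschitz_on_nonneg[OF lip] by (simp add: add_pos_nonneg)
    ultimately have "(infdist (x (t + h)) P - e * h) / (1 + h * L) \<le> infdist (x t) P"
      unfolding infdist_notempty[OF \<open>P \<noteq> {}\<close>]
      by (intro cINF_greatest[OF \<open>P \<noteq> {}\<close>]) (simp add: pos_divide_le_eq dist_commute mult.commute)
    with \<open>0 < 1 + h * L\<close> show ?thesis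
      by (simp add: pos_divide_le_eq algebra_simps)
  qed
  then show ?thesis using \<open>0 < \<delta>\<^sub>1\<close> \<open>\<delta>\<^sub>2 > 0\<close> by (intro exI[of _ "min \<delta>\<^sub>1 \<delta>\<^sub>2"]) auto
qed

lemma forward_invariant_if_euler_steps_stay:
  fixes v :: "real \<Rightarrow> real^'n \<Rightarrow> real^'n" and P :: "(real^'n) set"
  assumes "closed P"
    and lip: "\<And>t. 0 \<le> t \<Longrightarrow> L-lipschitz_on UNIV (v t)"
    and euler: "\<And>t. 0 \<le> t \<Longrightarrow> \<exists>\<delta>>0. \<forall>p\<in>P. \<forall>h. 0 < h \<and> h < \<delta> \<longrightarrow> p + h *\<^sub>R v t p \<in> P"
  shows "forward_invariant v P"
  unfolding forward_invariant_def
proof (intro allI impI)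
  fix x :: "real \<Rightarrow> real^'n" and T :: real
  assume "(\<forall>t\<ge>0. (x has_vector_derivative v t (x t)) (at t within {0..})) \<and> x 0 \<in> P"
    and "0 \<le> T"
  then have x_deriv: "\<And>t. 0 \<le> t \<Longrightarrow> (x has_vector_derivative v t (x t)) (at t within {0..})"
    and "x 0 \<in> P" by auto
  then have "P \<noteq> {}" by auto
  define D where "D t = infdist (x t) P" for t
  have "continuous_on {0..} x"
    using x_deriv has_vector_derivative_continuous continuous_on_eq_continuous_within
    by (metis atLeast_iff)
  then have "continuous_on {0..} D"
    unfolding D_def by (intro continuous_on_infdist)
  moreover have "D 0 \<le> 0" using \<open>x 0 \<in> P\<close> by (simp add: D_def)
  moreover have "0 \<le> L" using lip[of 0] lipschitz_on_nonneg by blast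
  moreover have "\<exists>\<delta>>0. \<forall>h. 0 < h \<and> h < \<delta> \<longrightarrow> D (t + h) \<le> (1 + h * L) * D t + e * h"
    if "0 \<le> t" "0 < e" for t e
  proof -
    obtain \<delta> where "0 < \<delta>" "\<And>p h. p \<in> P \<Longrightarrow> 0 < h \<Longrightarrow> h < \<delta> \<Longrightarrow> p + h *\<^sub>R v t p \<in> P"
      using euler[OF \<open>0 \<le> t\<close>] by blast
    from infdist_right_dini_bound[OF x_deriv[OF \<open>0 \<le> t\<close>] \<open>0 \<le> t\<close> lip[OF \<open>0 \<le> t\<close>] this
        \<open>P \<noteq> {}\<close> \<open>0 < e\<close>]
    show ?thesis unfolding D_def .
  qed
  ultimately have "D T \<le> 0"
    using \<open>0 \<le> T\<close> by (rule nonpos_if_dini_linear_bound)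
  then show "x T \<in> P"
    using infdist_nonneg[of "x T" P] in_closed_iff_infdist_zero[OF \<open>closed P\<close> \<open>P \<noteq> {}\<close>]
    by (auto simp: D_def)
qed

lemma step_below_bound:
  fixes p u x e w \<alpha> h :: real
  assumes "p \<le> u" "x \<le> e + \<alpha> * (u - p)" "e + w \<le> 0" "0 \<le> h" "h * \<alpha> \<le> 1"
  shows "p + h * (x + w) \<le> u"
proof -
  have "h * (x + w) \<le> h * \<alpha> * (u - p)"
    using assms(2,3) \<open>0 \<le> h\<close> mult_left_mono[of "x + w" "\<alpha> * (u - p)" h] by (simp add: mult.assoc)
  also have "\<dots> \<le> u - p"
    using assms(1,5) mult_right_mono[of "h * \<alpha>" 1 "u - p"] by simp
  finally show ?thesis by simp
qed

lemma closed_slab: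
  fixes H :: "real^'n^'m"
  shows "closed {x. hl \<le> H *v x \<and> H *v x \<le> hu}"
  unfolding less_eq_vec_def
  by (intro closed_Collect_conj closed_Collect_all closed_Collect_le continuous_intros
      linear_continuous_on matrix_vector_mul_bounded_linear)

lemma slab_point_between_faces:
  fixes g :: "real^'n \<Rightarrow> real^'n" and H :: "real^'n^'m"
  assumes mono: "\<And>x y. 0 \<le> H *v (y - x) \<Longrightarrow> 0 \<le> H *v (g y + \<alpha> *\<^sub>R y - (g x + \<alpha> *\<^sub>R x))"
    and eta_l: "H *v etal = hl" and eta_u: "H *v etau = hu"
    and p: "hl \<le> H *v p" "H *v p \<le> hu"
  shows "(H *v g p) $ a \<le> (H *v g etau) $ a + \<alpha> * (hu $ a - (H *v p) $ a)"
    and "(H *v g etal) $ a - \<alpha> * ((H *v p) $ a - hl $ a) \<le> (H *v g p) $ a"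
proof -
  note lin = matrix_vector_right_distrib matrix_vector_mult_diff_distrib matrix_vector_mult_scaleR
  have "0 \<le> H *v (g etau + \<alpha> *\<^sub>R etau - (g p + \<alpha> *\<^sub>R p))"
    by (rule mono) (use eta_u p in \<open>simp add: lin less_eq_vec_def\<close>)
  moreover have "0 \<le> H *v (g p + \<alpha> *\<^sub>R p - (g etal + \<alpha> *\<^sub>R etal))"
    by (rule mono) (use eta_l p in \<open>simp add: lin less_eq_vec_def\<close>)
  ultimately show "(H *v g p) $ a \<le> (H *v g etau) $ a + \<alpha> * (hu $ a - (H *v p) $ a)"
    and "(H *v g etal) $ a - \<alpha> * ((H *v p) $ a - hl $ a) \<le> (H *v g p) $ a"
    using eta_l eta_u by (simp_all add: lin less_eq_vec_def algebra_simps)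
qed

lemma euler_step_in_slab:
  fixes g :: "real^'n \<Rightarrow> real^'n" and H :: "real^'n^'m"
  assumes mono: "\<And>x y. 0 \<le> H *v (y - x) \<Longrightarrow> 0 \<le> H *v (g y + \<alpha> *\<^sub>R y - (g x + \<alpha> *\<^sub>R x))"
    and eta_l: "H *v etal = hl" and eta_u: "H *v etau = hu"
    and upper: "H *v g etau + dmax \<le> 0" and lower: "0 \<le> H *v g etal + dmin"
    and d: "dmin \<le> H *v d" "H *v d \<le> dmax"
    and p: "hl \<le> H *v p" "H *v p \<le> hu" and h: "0 \<le> h" "h * \<alpha> \<le> 1"
  shows "hl \<le> H *v (p + h *\<^sub>R (g p + d)) \<and> H *v (p + h *\<^sub>R (g p + d)) \<le> hu"
proof -
  note faces = slab_point_between_faces[OF mono eta_l eta_u p]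
  have "H *v g etau + H *v d \<le> 0" "0 \<le> H *v g etal + H *v d"
    using upper lower d by (meson add_left_mono order_trans)+
  then have worst: "(H *v g etau) $ a + (H *v d) $ a \<le> 0" "0 \<le> (H *v g etal) $ a + (H *v d) $ a"
    for a by (simp_all add: less_eq_vec_def)
  have "(H *v p) $ a + h * ((H *v g p) $ a + (H *v d) $ a) \<le> hu $ a" for a
    using p worst(1)[of a] faces(1)[of a] h step_below_bound by (simp add: less_eq_vec_def)
  moreover have "hl $ a \<le> (H *v p) $ a + h * ((H *v g p) $ a + (H *v d) $ a)" for a
    using p worst(2)[of a] faces(2)[of a] h
      step_below_bound[of "- (H *v p) $ a" "- hl $ a" "- (H *v g p) $ a"
        "- (H *v g etal) $ a" \<alpha> "- (H *v d) $ a" h]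
    by (simp add: less_eq_vec_def algebra_simps)
  ultimately show ?thesis
    by (simp add: matrix_vector_right_distrib matrix_vector_mult_scaleR less_eq_vec_def)
qed

lemma slab_forward_invariant_if_cone_monotone:
  fixes g :: "real^'n \<Rightarrow> real^'n" and H :: "real^'n^'m" and C :: "real^'r^'n"
    and w :: "real \<Rightarrow> real^'r"
  assumes lip: "L-lipschitz_on UNIV g"
    and mono: "\<And>x y. 0 \<le> H *v (y - x) \<Longrightarrow> 0 \<le> H *v (g y + \<alpha> *\<^sub>R y - (g x + \<alpha> *\<^sub>R x))"
    and eta_l: "H *v etal = hl" and eta_u: "H *v etau = hu"
    and upper: "H *v g etau + mat_pos (H ** C) *v wu + mat_neg (H ** C) *v wl \<le> 0"
    and lower: "0 \<le> H *v g etal + mat_pos (H ** C) *v wl + mat_neg (H ** C) *v wu"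
    and w_box: "\<forall>t\<ge>0. wl \<le> w t \<and> w t \<le> wu"
  shows "forward_invariant (\<lambda>t x. g x + C *v w t) {x. hl \<le> H *v x \<and> H *v x \<le> hu}"
proof (rule forward_invariant_if_euler_steps_stay)
  show "closed {x. hl \<le> H *v x \<and> H *v x \<le> hu}" by (rule closed_slab)
  show "(L + 0)-lipschitz_on UNIV (\<lambda>x. g x + C *v w t)" for t
    using lip by (intro lipschitz_on_add lipschitz_on_constant)
  have euler: "p + h *\<^sub>R (g p + C *v w t) \<in> {x. hl \<le> H *v x \<and> H *v x \<le> hu}"
    if "hl \<le> H *v p" "H *v p \<le> hu" "0 \<le> t" "0 \<le> h" "h * \<alpha> \<le> 1" for p t h
  proof -
    have "wl \<le> w t" "w t \<le> wu" using w_box \<open>0 \<le> t\<close> by auto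
    then have "mat_pos (H ** C) *v wl + mat_neg (H ** C) *v wu \<le> H *v (C *v w t)"
      and "H *v (C *v w t) \<le> mat_pos (H ** C) *v wu + mat_neg (H ** C) *v wl"
      unfolding matrix_vector_mul_assoc
      by (rule box_bound_le_matrix_vector_mult, rule matrix_vector_mult_le_box_bound)
    from euler_step_in_slab[OF mono eta_l eta_u upper[unfolded add.assoc]
        lower[unfolded add.assoc] this that(1,2,4,5)]
    show ?thesis by simp
  qed
  have "h * \<alpha> \<le> 1" if "0 < h" "h < 1 / (\<bar>\<alpha>\<bar> + 1)" for h
    using that by (smt (verit) mult_left_mono mult_less_cancel_left_pos pos_less_divide_eq abs_ge_self)
  with euler show "\<exists>\<delta>>0. \<forall>p\<in>{x. hl \<le> H *v x \<and> H *v x \<le> hu}. \<forall>h. 0 < h \<and> h < \<delta> \<longrightarrow>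
      p + h *\<^sub>R (g p + C *v w t) \<in> {x. hl \<le> H *v x \<and> H *v x \<le> hu}"
    if "0 \<le> t" for t
    using that by (intro exI[of _ "1 / (\<bar>\<alpha>\<bar> + 1)"]) auto
qed

theorem theorem5:
  fixes f :: "real^'n \<Rightarrow> real^'n"
    and J :: "real^'n \<Rightarrow> real^'n^'n"
    and B :: "real^'p^'n" and C :: "real^'r^'n"
    and A :: "nat \<Rightarrow> real^'n^'n" and k :: nat
    and H :: "real^'n^'m" and hl hu :: "real^'m"
    and V :: "real^'q^'n"
    and etal etau :: "real^'n"
    and wl wu :: "real^'r"
    and F :: "real^'n^'p" and \<alpha> :: real
  assumes f_deriv: "\<And>x. (f has_derivative (\<lambda>v. J x *v v)) (at x)"
    and J_cont: "continuous_on UNIV J"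
    and J_conv: "\<And>x. J x \<in> convex hull (A ` {1..k})"
    and H_rank: "rank H = CARD('n)"
    and h_le: "hl \<le> hu"
    and V_gen: "{x. H *v x \<ge> 0} = {V *v y | y. y \<ge> 0}"
    and eta_l: "H *v etal = hl" and eta_u: "H *v etau = hu"
    and w_le: "wl \<le> wu"
    and cond1: "\<And>i a b. i \<in> {1..k} \<Longrightarrow>
                   (H ** (A i + B ** F + \<alpha> *\<^sub>R mat 1) ** V) $ a $ b \<ge> 0"
    and cond2: "H *v (f etau + B *v (F *v etau)) + mat_pos (H ** C) *v wu
                  + mat_neg (H ** C) *v wl \<le> 0"
    and cond3: "H *v (f etal + B *v (F *v etal)) + mat_pos (H ** C) *v wl
                  + mat_neg (H ** C) *v wu \<ge> 0"
  shows "\<forall>w :: real \<Rightarrow> real^'r. (\<forall>t\<ge>0. wl \<le> w t \<and> w t \<le> wu) \<longrightarrow>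
           forward_invariant (\<lambda>t x. f x + B *v (F *v x) + C *v w t)
             {x. hl \<le> H *v x \<and> H *v x \<le> hu}"
proof (intro allI impI)
  fix w :: "real \<Rightarrow> real^'r"
  assume w_box: "\<forall>t\<ge>0. wl \<le> w t \<and> w t \<le> wu"
  define g where "g x = f x + B *v (F *v x)" for x
  define Q where "Q = B ** F + \<alpha> *\<^sub>R mat 1"
  have "0 \<le> H ** (M + Q) ** V" if "M \<in> A ` {1..k}" for M
    using cond1 that by (auto simp: Q_def less_eq_vec_def add.assoc)
  then have JQ_nonneg: "0 \<le> H ** (J x + Q) ** V" for x
    using J_conv by (rule nonneg_sandwich_convex_hull)
  have shift: "f x + Q *v x = g x + \<alpha> *\<^sub>R x" for x
    by (simp add: g_def Q_def matrix_vector_mult_add_rdistrib matrix_vector_mul_assoc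
        flip: scaleR_matrix_vector_assoc)
  have mono: "0 \<le> H *v (g y + \<alpha> *\<^sub>R y - (g x + \<alpha> *\<^sub>R x))"
    if "0 \<le> H *v (y - x)" for x y
    using cone_monotone_if_jacobian_cone_preserving[OF f_deriv JQ_nonneg V_gen that]
    unfolding shift .
  have "(g has_derivative (\<lambda>v. (J x + B ** F) *v v)) (at x)" for x
    unfolding g_def using f_deriv[of x]
    by (auto intro!: derivative_eq_intros bounded_linear.has_derivative[OF matrix_vector_mul_bounded_linear]
        simp: matrix_vector_mult_add_rdistrib matrix_vector_mul_assoc)
  moreover have "bounded (range (\<lambda>x. J x + B ** F))"
    using J_conv finite_imp_bounded_convex_hull[of "A ` {1..k}"]
    by (intro bounded_plus_comp) (auto intro: bounded_subset)
  ultimately obtain L where "L-lipschitz_on UNIV g"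
    by (rule lipschitz_if_bounded_jacobian)
  from slab_forward_invariant_if_cone_monotone[OF this mono eta_l eta_u
      cond2[folded g_def] cond3[folded g_def] w_box]
  show "forward_invariant (\<lambda>t x. f x + B *v (F *v x) + C *v w t) {x. hl \<le> H *v x \<and> H *v x \<le> hu}"
    by (simp add: g_def)
qed

end
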